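(* Let $G$ be a simple graph on $X=\{x_1,\ldots,x_n\}$ and let $G'$ be the graph obtained from $G$ by duplicating every vertex of $G$ exactly $k-1$ times. Then $G$ is shellable if and only if $G'$ is $k$-shellable.
   Context: Duplicating each vertex $k-1$ times gives the graph $G'$ with vertex set $\{x_{ij}:1\le i\le n,1\le j\le k\}$ and edge set $\{x_{ir}x_{js}: x_ix_j\in E(G),\ 1\le r,s\le k\}$. The independence complex $\Delta_G$ of a graph $G$ has as faces the sets of pairwise non-adjacent vertices. A graph is shellable (resp. $k$-shellable) if $\Delta_G$ is. $\langle F_1,\ldots,F_s\rangle$ denotes the simplicial complex with facets $F_1,\dots,F_s$. A complex is shellable if its facets can be ordered $F_1,\ldots,F_r$ with $\langle F_j\rangle\cap\langle F_1,\ldots,F_{j-1}\rangle$ pure of dimension $\dim F_j-1$ for all $j\ge2$. A complex $\Gamma$ of dimension $d$ is $k$-shellable ($1\le k\le d+1$) if its facets can be ordered $F_1,\ldots,F_r$ such that for every $j=2,\ldots,r$, $\Gamma_j=\langle F_j\rangle\cap\langle F_1,\ldots,F_{j-1}\rangle$ satisfies (i) $\Gamma_j$ is generated by a nonempty set of faces of $\langle F_j\rangle$ of dimension $|F_j|-k-1$; (ii) if $\Gamma_j$ has more than one facet, then for every two distinct facets $\sigma,\tau$ of $\Gamma_j$, $F_j\subseteq\sigma\cup\tau$. *)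

theory Defs
  imports Main
begin

definition simple_graph :: "'a set \<Rightarrow> 'a set set \<Rightarrow> bool" where
  "simple_graph V E \<longleftrightarrow> finite V \<and>
     (\<forall>e\<in>E. \<exists>u v. e = {u, v} \<and> u \<noteq> v \<and> u \<in> V \<and> v \<in> V)"

text \<open>Duplicating each vertex k-1 times: vertex x_i becomes x_{i1},...,x_{ik}.\<close>
definition dup_vertices :: "'a set \<Rightarrow> nat \<Rightarrow> ('a \<times> nat) set" where
  "dup_vertices V k = V \<times> {1..k}"

definition dup_edges :: "'a set set \<Rightarrow> nat \<Rightarrow> ('a \<times> nat) set set" where
  "dup_edges E k = {{(u, r), (v, s)} | u v r s. {u, v} \<in> E \<and> r \<in> {1..k} \<and> s \<in> {1..k}}"

definition indep_complex :: "'a set \<Rightarrow> 'a set set \<Rightarrow> 'a set set" where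
  "indep_complex V E = {S. S \<subseteq> V \<and> (\<forall>u\<in>S. \<forall>v\<in>S. {u, v} \<notin> E)}"

definition facets :: "'a set set \<Rightarrow> 'a set set" where
  "facets \<Delta> = {F \<in> \<Delta>. \<forall>H\<in>\<Delta>. F \<subseteq> H \<longrightarrow> H = F}"

text \<open>\<Gamma>_j = <F_j> \<inter> <F_1,...,F_{j-1}> for a facet ordering Fs (0-indexed).\<close>
definition shell_inter :: "'a set list \<Rightarrow> nat \<Rightarrow> 'a set set" where
  "shell_inter Fs j = {\<sigma>. \<sigma> \<subseteq> Fs ! j \<and> (\<exists>i<j. \<sigma> \<subseteq> Fs ! i)}"

text \<open>Shellable (non-pure sense): \<Gamma>_j pure of dimension dim F_j - 1.\<close>
definition shellable :: "'a set set \<Rightarrow> bool" where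
  "shellable \<Delta> \<longleftrightarrow> (\<exists>Fs. distinct Fs \<and> set Fs = facets \<Delta> \<and>
     (\<forall>j. 0 < j \<and> j < length Fs \<longrightarrow>
        (\<forall>\<sigma>\<in>facets (shell_inter Fs j). card \<sigma> + 1 = card (Fs ! j))))"

text \<open>k-shellable, for a complex of dimension d with 1 \<le> k \<le> d+1
  (d+1 = maximal cardinality of a face).  A face of dimension |F_j|-k-1 has
  cardinality |F_j|-k.\<close>
definition k_shellable :: "nat \<Rightarrow> 'a set set \<Rightarrow> bool" where
  "k_shellable k \<Delta> \<longleftrightarrow> 1 \<le> k \<and> k \<le> Max (card ` \<Delta>) \<and>
    (\<exists>Fs. distinct Fs \<and> set Fs = facets \<Delta> \<and>
     (\<forall>j. 0 < j \<and> j < length Fs \<longrightarrow>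
        facets (shell_inter Fs j) \<noteq> {} \<and>
        (\<forall>\<sigma>\<in>facets (shell_inter Fs j). card \<sigma> + k = card (Fs ! j)) \<and>
        (card (facets (shell_inter Fs j)) > 1 \<longrightarrow>
           (\<forall>\<sigma>\<in>facets (shell_inter Fs j). \<forall>\<tau>\<in>facets (shell_inter Fs j).
               \<sigma> \<noteq> \<tau> \<longrightarrow> Fs ! j \<subseteq> \<sigma> \<union> \<tau>))))"

end

theory Submission
  imports Defs
begin

text \<open>The independent sets of the duplicated graph are exactly the sets whose projection
  to the original vertices is independent, so every facet of the duplicated complex is a
  full blow-up \<open>F \<times> {1..k}\<close> of a facet \<open>F\<close>, and blowing up commutes with forming the complexes
  \<open>\<Gamma>\<^sub>j\<close> of a facet ordering.  Blowing up multiplies cardinalities by \<open>k\<close>, so codimension one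
  becomes codimension \<open>k\<close>; and two distinct codimension-one faces of a finite set always cover
  it, so condition (ii) of \<open>k\<close>-shellability comes for free.\<close>

lemma fst_dup_vertices: "1 \<le> k \<Longrightarrow> fst ` dup_vertices A k = A"
  unfolding dup_vertices_def by force

lemma dup_vertices_subset_iff:
  "1 \<le> k \<Longrightarrow> dup_vertices A k \<subseteq> dup_vertices B k \<longleftrightarrow> A \<subseteq> B"
  by (metis fst_dup_vertices image_mono Sigma_mono dup_vertices_def order_refl)

lemma inj_dup_vertices: "1 \<le> k \<Longrightarrow> inj (\<lambda>A. dup_vertices A k)"
  by (rule injI) (metis fst_dup_vertices)

lemma card_dup_vertices: "card (dup_vertices A k) = card A * k"
  unfolding dup_vertices_def by (simp add: card_cartesian_product)

lemma subset_dup_vertices_fst: "S \<subseteq> A \<times> {1..k} \<Longrightarrow> S \<subseteq> dup_vertices (fst ` S) k"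
  unfolding dup_vertices_def by force

lemma facets_eq_image:
  assumes retract: "\<And>\<sigma>. \<sigma> \<in> \<Gamma>' \<Longrightarrow> \<sigma> \<subseteq> D (P \<sigma>) \<and> D (P \<sigma>) \<in> \<Gamma>' \<and> P \<sigma> \<in> \<Gamma>"
    and D_mem: "\<And>A. A \<in> \<Gamma> \<Longrightarrow> D A \<in> \<Gamma>'"
    and D_subset_iff: "\<And>A B. D A \<subseteq> D B \<longleftrightarrow> A \<subseteq> B"
    and P_D: "\<And>A. P (D A) = A"
    and P_mono: "\<And>\<sigma> \<tau>. \<sigma> \<subseteq> \<tau> \<Longrightarrow> P \<sigma> \<subseteq> P \<tau>"
  shows "facets \<Gamma>' = D ` facets \<Gamma>"
proof
  show "facets \<Gamma>' \<subseteq> D ` facets \<Gamma>"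
  proof
    fix S assume S: "S \<in> facets \<Gamma>'"
    then have "S \<in> \<Gamma>'" and S_max: "\<forall>H\<in>\<Gamma>'. S \<subseteq> H \<longrightarrow> H = S"
      unfolding facets_def by auto
    then have S_eq: "S = D (P S)" and "P S \<in> \<Gamma>" using retract by metis+
    moreover have "H = P S" if "H \<in> \<Gamma>" "P S \<subseteq> H" for H
      using S_max D_mem[OF that(1)] D_subset_iff[of "P S" H] that(2) S_eq P_D by metis
    ultimately show "S \<in> D ` facets \<Gamma>" unfolding facets_def by blast
  qed
next
  show "D ` facets \<Gamma> \<subseteq> facets \<Gamma>'"
  proof
    fix S assume "S \<in> D ` facets \<Gamma>"
    then obtain F where F: "F \<in> facets \<Gamma>" and S_eq: "S = D F" by blast
    have "H = S" if H: "H \<in> \<Gamma>'" "S \<subseteq> H" for H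
    proof -
      have "F \<subseteq> P H" using P_mono[OF H(2)] P_D S_eq by metis
      then have "P H = F" using F retract[OF H(1)] unfolding facets_def by blast
      then show "H = S" using retract[OF H(1)] H(2) S_eq D_subset_iff by blast
    qed
    then show "S \<in> facets \<Gamma>'" using F D_mem S_eq unfolding facets_def by blast
  qed
qed

lemma facets_nonempty:
  assumes "finite F" "\<Gamma> \<subseteq> Pow F" "\<Gamma> \<noteq> {}"
  shows "facets \<Gamma> \<noteq> {}"
proof -
  have "finite \<Gamma>" using assms(1,2) finite_subset by blast
  then obtain A where "A \<in> \<Gamma>" "\<forall>H\<in>\<Gamma>. A \<subseteq> H \<longrightarrow> A = H"
    using finite_has_maximal assms(3) by blast
  then show ?thesis unfolding facets_def by blast
qed

lemma codim_one_subsets_cover: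
  assumes "finite F" "A \<subseteq> F" "B \<subseteq> F" "card A + 1 = card F" "card B + 1 = card F" "A \<noteq> B"
  shows "F \<subseteq> A \<union> B"
proof
  fix x assume x: "x \<in> F"
  have "C = F - {x}" if "C \<subseteq> F" "card C + 1 = card F" "x \<notin> C" for C
  proof (rule card_subset_eq)
    show "finite (F - {x})" "C \<subseteq> F - {x}" using assms(1) that by auto
    show "card C = card (F - {x})" using assms(1) that(2) x by simp
  qed
  then show "x \<in> A \<union> B" using assms by blast
qed

lemma dup_edge_iff:
  assumes "a \<in> V \<times> {1..k}" "b \<in> V \<times> {1..k}"
  shows "{a, b} \<in> dup_edges E k \<longleftrightarrow> {fst a, fst b} \<in> E"
proof
  assume "{a, b} \<in> dup_edges E k"
  then obtain u v r s where "{a, b} = {(u, r), (v, s)}" "{u, v} \<in> E"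
    unfolding dup_edges_def by blast
  then show "{fst a, fst b} \<in> E" by (auto simp: doubleton_eq_iff insert_commute)
next
  assume "{fst a, fst b} \<in> E"
  then show "{a, b} \<in> dup_edges E k"
    using assms unfolding dup_edges_def by (cases a, cases b) auto
qed

lemma indep_complex_dup_iff:
  "S \<in> indep_complex (dup_vertices V k) (dup_edges E k) \<longleftrightarrow>
     S \<subseteq> V \<times> {1..k} \<and> fst ` S \<in> indep_complex V E"
proof (cases "S \<subseteq> V \<times> {1..k}")
  case True
  then have "{a, b} \<in> dup_edges E k \<longleftrightarrow> {fst a, fst b} \<in> E" if "a \<in> S" "b \<in> S" for a b
    using dup_edge_iff that by blast
  with True show ?thesis unfolding indep_complex_def dup_vertices_def by auto
qed (auto simp: indep_complex_def dup_vertices_def)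

lemma facets_indep_complex_dup:
  assumes k: "1 \<le> k"
  shows "facets (indep_complex (dup_vertices V k) (dup_edges E k)) =
    (\<lambda>A. dup_vertices A k) ` facets (indep_complex V E)"
proof (rule facets_eq_image[where P = "\<lambda>S. fst ` S"])
  show dup_mem: "dup_vertices A k \<in> indep_complex (dup_vertices V k) (dup_edges E k)"
    if "A \<in> indep_complex V E" for A
  proof -
    have "dup_vertices A k \<subseteq> V \<times> {1..k}"
      using that unfolding indep_complex_def dup_vertices_def by blast
    then show ?thesis using that by (simp add: indep_complex_dup_iff fst_dup_vertices[OF k])
  qed
  fix \<sigma> assume "\<sigma> \<in> indep_complex (dup_vertices V k) (dup_edges E k)"
  then have "\<sigma> \<subseteq> V \<times> {1..k}" and "fst ` \<sigma> \<in> indep_complex V E"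
    by (simp_all add: indep_complex_dup_iff)
  then show "\<sigma> \<subseteq> dup_vertices (fst ` \<sigma>) k \<and>
      dup_vertices (fst ` \<sigma>) k \<in> indep_complex (dup_vertices V k) (dup_edges E k) \<and>
      fst ` \<sigma> \<in> indep_complex V E"
    using subset_dup_vertices_fst dup_mem by blast
qed (simp_all add: dup_vertices_subset_iff[OF k] fst_dup_vertices[OF k] image_mono)

lemma shell_inter_map:
  assumes "j < length Fs"
  shows "shell_inter (map f Fs) j = {\<sigma>. \<sigma> \<subseteq> f (Fs ! j) \<and> (\<exists>i<j. \<sigma> \<subseteq> f (Fs ! i))}"
  unfolding shell_inter_def using assms by (metis (lifting) nth_map order.strict_trans)

lemma dup_vertices_mem_shell_inter_map_iff:
  assumes k: "1 \<le> k" and j: "j < length Fs"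
  shows "dup_vertices A k \<in> shell_inter (map (\<lambda>A. dup_vertices A k) Fs) j \<longleftrightarrow>
    A \<in> shell_inter Fs j"
  unfolding shell_inter_map[OF j] by (simp add: shell_inter_def dup_vertices_subset_iff[OF k])

lemma facets_shell_inter_map_dup:
  assumes k: "1 \<le> k" and j: "j < length Fs"
  shows "facets (shell_inter (map (\<lambda>A. dup_vertices A k) Fs) j) =
    (\<lambda>A. dup_vertices A k) ` facets (shell_inter Fs j)"
proof (rule facets_eq_image[where P = "\<lambda>S. fst ` S"])
  fix \<sigma> assume \<sigma>: "\<sigma> \<in> shell_inter (map (\<lambda>A. dup_vertices A k) Fs) j"
  then have "\<sigma> \<subseteq> dup_vertices (Fs ! j) k"
    unfolding shell_inter_map[OF j] by simp
  then have "\<sigma> \<subseteq> dup_vertices (fst ` \<sigma>) k"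
    using subset_dup_vertices_fst unfolding dup_vertices_def by blast
  moreover have "dup_vertices (fst ` \<sigma>) k \<in> shell_inter (map (\<lambda>A. dup_vertices A k) Fs) j"
    using \<sigma> unfolding shell_inter_map[OF j] dup_vertices_def by fastforce
  ultimately show "\<sigma> \<subseteq> dup_vertices (fst ` \<sigma>) k \<and>
      dup_vertices (fst ` \<sigma>) k \<in> shell_inter (map (\<lambda>A. dup_vertices A k) Fs) j \<and>
      fst ` \<sigma> \<in> shell_inter Fs j"
    using dup_vertices_mem_shell_inter_map_iff[OF k j] by blast
qed (simp_all add: dup_vertices_mem_shell_inter_map_iff[OF k j] dup_vertices_subset_iff[OF k]
  fst_dup_vertices[OF k] image_mono)

definition shelling_step :: "'a set list \<Rightarrow> nat \<Rightarrow> bool" where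
  "shelling_step Fs j \<longleftrightarrow> (\<forall>\<sigma>\<in>facets (shell_inter Fs j). card \<sigma> + 1 = card (Fs ! j))"

definition k_shelling_step :: "nat \<Rightarrow> 'a set list \<Rightarrow> nat \<Rightarrow> bool" where
  "k_shelling_step k Fs j \<longleftrightarrow>
     facets (shell_inter Fs j) \<noteq> {} \<and>
     (\<forall>\<sigma>\<in>facets (shell_inter Fs j). card \<sigma> + k = card (Fs ! j)) \<and>
     (card (facets (shell_inter Fs j)) > 1 \<longrightarrow>
        (\<forall>\<sigma>\<in>facets (shell_inter Fs j). \<forall>\<tau>\<in>facets (shell_inter Fs j).
            \<sigma> \<noteq> \<tau> \<longrightarrow> Fs ! j \<subseteq> \<sigma> \<union> \<tau>))"

lemma shellable_iff_shelling_step: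
  "shellable \<Delta> \<longleftrightarrow> (\<exists>Fs. distinct Fs \<and> set Fs = facets \<Delta> \<and>
     (\<forall>j. 0 < j \<and> j < length Fs \<longrightarrow> shelling_step Fs j))"
  unfolding shellable_def shelling_step_def ..

lemma k_shellable_iff_k_shelling_step:
  "k_shellable k \<Delta> \<longleftrightarrow> 1 \<le> k \<and> k \<le> Max (card ` \<Delta>) \<and>
     (\<exists>Fs. distinct Fs \<and> set Fs = facets \<Delta> \<and>
       (\<forall>j. 0 < j \<and> j < length Fs \<longrightarrow> k_shelling_step k Fs j))"
  unfolding k_shellable_def k_shelling_step_def ..

lemma ex_distinct_list_image_iff:
  assumes "inj_on f S"
  shows "(\<exists>ys. distinct ys \<and> set ys = f ` S \<and> P ys) \<longleftrightarrow>
         (\<exists>xs. distinct xs \<and> set xs = S \<and> P (map f xs))"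
proof
  assume "\<exists>ys. distinct ys \<and> set ys = f ` S \<and> P ys"
  then obtain ys where ys: "distinct ys" "set ys = f ` S" "P ys" by blast
  define xs where "xs = map (inv_into S f) ys"
  have map_xs: "map f xs = ys"
    unfolding xs_def map_map by (rule map_idI) (simp add: ys(2) f_inv_into_f)
  have "set xs = S" unfolding xs_def using ys(2) assms by (simp add: inv_into_image_cancel)
  moreover have "distinct xs" using ys(1) by (simp flip: map_xs add: distinct_map)
  ultimately show "\<exists>xs. distinct xs \<and> set xs = S \<and> P (map f xs)" using ys(3) map_xs by blast
next
  assume "\<exists>xs. distinct xs \<and> set xs = S \<and> P (map f xs)"
  then obtain xs where "distinct xs" "set xs = S" "P (map f xs)" by blast
  then show "\<exists>ys. distinct ys \<and> set ys = f ` S \<and> P ys"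
    using assms by (intro exI[of _ "map f xs"]) (simp add: distinct_map)
qed

lemma k_shelling_step_map_dup_iff:
  assumes k: "1 \<le> k" and j: "0 < j" "j < length Fs" and fin: "finite (Fs ! j)"
  shows "k_shelling_step k (map (\<lambda>A. dup_vertices A k) Fs) j \<longleftrightarrow> shelling_step Fs j"
proof -
  let ?\<Gamma> = "shell_inter Fs j"
  have facets_eq: "facets (shell_inter (map (\<lambda>A. dup_vertices A k) Fs) j) =
      (\<lambda>A. dup_vertices A k) ` facets ?\<Gamma>"
    using facets_shell_inter_map_dup[OF k j(2)] .
  have nth_eq: "map (\<lambda>A. dup_vertices A k) Fs ! j = dup_vertices (Fs ! j) k" using j by simp
  have card_iff: "a * k + k = b * k \<longleftrightarrow> a + 1 = b" for a b :: nat
    using k by (metis add_mult_distrib mult_1 mult_cancel2 not_one_le_zero)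
  show ?thesis
  proof
    assume "k_shelling_step k (map (\<lambda>A. dup_vertices A k) Fs) j"
    then show "shelling_step Fs j"
      unfolding k_shelling_step_def shelling_step_def facets_eq nth_eq
      by (simp add: card_dup_vertices card_iff)
  next
    assume step: "shelling_step Fs j"
    have "facets ?\<Gamma> \<noteq> {}"
    proof (rule facets_nonempty[OF fin])
      show "?\<Gamma> \<subseteq> Pow (Fs ! j)" "?\<Gamma> \<noteq> {}" using j unfolding shell_inter_def by auto
    qed
    moreover have "dup_vertices (Fs ! j) k \<subseteq> dup_vertices A k \<union> dup_vertices B k"
      if "A \<in> facets ?\<Gamma>" "B \<in> facets ?\<Gamma>" "dup_vertices A k \<noteq> dup_vertices B k" for A B
    proof -
      have "\<sigma> \<subseteq> Fs ! j" if "\<sigma> \<in> facets ?\<Gamma>" for \<sigma>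
        using that unfolding facets_def shell_inter_def by auto
      then have "Fs ! j \<subseteq> A \<union> B"
        using that step codim_one_subsets_cover[OF fin] unfolding shelling_step_def by metis
      then show ?thesis unfolding dup_vertices_def by auto
    qed
    ultimately show "k_shelling_step k (map (\<lambda>A. dup_vertices A k) Fs) j"
      using step unfolding k_shelling_step_def shelling_step_def facets_eq nth_eq
      by (auto simp: card_dup_vertices card_iff)
  qed
qed

lemma finite_indep_complex: "finite V \<Longrightarrow> finite (indep_complex V E)"
  by (rule finite_subset[of _ "Pow V"]) (auto simp: indep_complex_def)

lemma singleton_in_indep_complex:
  "simple_graph V E \<Longrightarrow> v \<in> V \<Longrightarrow> {v} \<in> indep_complex V E"
  unfolding simple_graph_def indep_complex_def by (auto simp: doubleton_eq_iff)

lemma le_Max_card_indep_complex_dup: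
  assumes "simple_graph V E" "V \<noteq> {}" "1 \<le> k"
  shows "k \<le> Max (card ` indep_complex (dup_vertices V k) (dup_edges E k))"
proof -
  obtain v where v: "v \<in> V" using assms(2) by blast
  have "finite (card ` indep_complex (dup_vertices V k) (dup_edges E k))"
    using assms(1) unfolding simple_graph_def dup_vertices_def
    by (simp add: finite_indep_complex)
  moreover have "dup_vertices {v} k \<in> indep_complex (dup_vertices V k) (dup_edges E k)"
    using v singleton_in_indep_complex[OF assms(1) v]
    by (simp add: indep_complex_dup_iff fst_dup_vertices[OF assms(3)]) (auto simp: dup_vertices_def)
  ultimately show ?thesis
    using card_dup_vertices[of "{v}" k] Max_ge by fastforce
qed

theorem theorem4p2:
  fixes V :: "'a set" and E :: "'a set set" and k :: nat
  assumes "simple_graph V E" and "V \<noteq> {}" and "1 \<le> k"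
  shows "shellable (indep_complex V E) \<longleftrightarrow>
         k_shellable k (indep_complex (dup_vertices V k) (dup_edges E k))"
proof -
  let ?\<Delta> = "indep_complex V E"
  have finite_facets: "finite F" if "F \<in> facets ?\<Delta>" for F
  proof (rule finite_subset)
    show "F \<subseteq> V" using that unfolding facets_def indep_complex_def by blast
    show "finite V" using assms(1) unfolding simple_graph_def by blast
  qed
  have steps_iff:
    "(\<forall>j. 0 < j \<and> j < length (map (\<lambda>A. dup_vertices A k) Fs) \<longrightarrow>
        k_shelling_step k (map (\<lambda>A. dup_vertices A k) Fs) j) \<longleftrightarrow>
     (\<forall>j. 0 < j \<and> j < length Fs \<longrightarrow> shelling_step Fs j)"
    if "set Fs = facets ?\<Delta>" for Fs
  proof -
    have "finite (Fs ! j)" if "j < length Fs" for j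
      using finite_facets nth_mem that \<open>set Fs = facets ?\<Delta>\<close> by blast
    then show ?thesis using k_shelling_step_map_dup_iff[OF assms(3)] by auto
  qed
  have inj: "inj_on (\<lambda>A. dup_vertices A k) (facets ?\<Delta>)"
    using inj_dup_vertices[OF assms(3)] by (rule inj_on_subset) simp
  show ?thesis
    unfolding shellable_iff_shelling_step k_shellable_iff_k_shelling_step
      facets_indep_complex_dup[OF assms(3)] ex_distinct_list_image_iff[OF inj]
    using assms(3) le_Max_card_indep_complex_dup[OF assms] steps_iff by blast
qed

end
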